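(* Let $K$ be a field of characteristic $0$ with henselian valuation ring $A$, maximal ideal $\mathfrak{m}_A$, valuation $v$ and residue field of characteristic $p>0$, containing a primitive $p$-th root of unity $\zeta$; put $\mathfrak{z}=\zeta-1$. Let $L|K$ be a Kummer extension of degree $p$ with defect $p$, $B$ the integral closure of $A$ in $L$, and let $\mathscr{S}=\{\alpha\in L: \alpha^p=h\in A^\times,\ h-1\in\mathfrak{m}_A,\ K(\alpha)=L\}$. For $\alpha\in\mathscr{S}$ let $\alpha'=\gamma_\alpha(\alpha-1)/\mathfrak{z}$ with $\gamma_\alpha\in A$ chosen so that $\alpha'\in B^\times$. If $\alpha_1,\alpha_2\in\mathscr{S}$ satisfy $v(\alpha_1-1)\le v(\alpha_2-1)$, then $A[\alpha_1']\subset A[\alpha_2']$.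
   Context: $v$ also denotes its unique extension to $L$. Defect $p$ means $(v(L^\times):v(K^\times))=1$ and the residue extension is trivial, although $[L:K]=p$. *)

theory Defs
  imports "HOL-Computational_Algebra.Polynomial"
begin

text \<open>The big field L is the whole type 'a (a field of characteristic 0);
  the subfield K is a subset of it. The (unique) extension of the valuation v to L is
  represented by its valuation ring Ov of L; the valuation ring of K is A = Ov \<inter> K.\<close>

definition is_subring :: "'a::field set \<Rightarrow> bool" where
  "is_subring R \<longleftrightarrow> 0 \<in> R \<and> 1 \<in> R \<and>
     (\<forall>x\<in>R. \<forall>y\<in>R. x + y \<in> R \<and> x - y \<in> R \<and> x * y \<in> R)"

definition is_subfield :: "'a::field set \<Rightarrow> bool" where
  "is_subfield F \<longleftrightarrow> is_subring F \<and> (\<forall>x\<in>F. x \<noteq> 0 \<longrightarrow> inverse x \<in> F)"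

definition is_valuation_ring :: "'a::field set \<Rightarrow> bool" where
  "is_valuation_ring Ov \<longleftrightarrow> is_subring Ov \<and> (\<forall>x. x \<noteq> 0 \<longrightarrow> x \<in> Ov \<or> inverse x \<in> Ov)"

definition units_in :: "'a::field set \<Rightarrow> 'a set" where
  "units_in R = {x \<in> R. x \<noteq> 0 \<and> inverse x \<in> R}"

definition max_ideal :: "'a::field set \<Rightarrow> 'a set" where
  "max_ideal R = R - units_in R"

text \<open>v(x) \<le> v(y) for the valuation v with valuation ring Ov.\<close>
definition val_le :: "'a::field set \<Rightarrow> 'a \<Rightarrow> 'a \<Rightarrow> bool" where
  "val_le Ov x y \<longleftrightarrow> (if x = 0 then y = 0 else y / x \<in> Ov)"

definition henselian :: "'a::field set \<Rightarrow> 'a set \<Rightarrow> bool" where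
  "henselian A m \<longleftrightarrow> (\<forall>f a. (\<forall>i. coeff f i \<in> A) \<and> lead_coeff f = 1 \<and> a \<in> A \<and>
       poly f a \<in> m \<and> poly (pderiv f) a \<notin> m \<longrightarrow> (\<exists>b\<in>A. poly f b = 0 \<and> b - a \<in> m))"

definition gen_field :: "'a::field set \<Rightarrow> 'a \<Rightarrow> 'a set" where
  "gen_field K a = \<Inter>{F. is_subfield F \<and> K \<subseteq> F \<and> a \<in> F}"

definition ext_degree_is :: "'a::field set \<Rightarrow> nat \<Rightarrow> bool" where
  "ext_degree_is K n \<longleftrightarrow> (\<exists>b :: nat \<Rightarrow> 'a.
     (\<forall>c. (\<forall>i<n. c i \<in> K) \<and> (\<Sum>i<n. c i * b i) = 0 \<longrightarrow> (\<forall>i<n. c i = 0)) \<and>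
     (\<forall>x. \<exists>c. (\<forall>i<n. c i \<in> K) \<and> x = (\<Sum>i<n. c i * b i)))"

definition integral_closure :: "'a::field set \<Rightarrow> 'a set" where
  "integral_closure A = {x. \<exists>f. (\<forall>i. coeff f i \<in> A) \<and> lead_coeff f = 1 \<and> poly f x = 0}"

definition adjoin :: "'a::field set \<Rightarrow> 'a \<Rightarrow> 'a set" where
  "adjoin A x = {poly q x | q. \<forall>i. coeff q i \<in> A}"

definition kummer_gens :: "'a::field set \<Rightarrow> 'a set \<Rightarrow> nat \<Rightarrow> 'a set" where
  "kummer_gens K Ov p = {\<alpha>. \<exists>h. \<alpha> ^ p = h \<and> h \<in> units_in (Ov \<inter> K) \<and>
       h - 1 \<in> max_ideal Ov \<inter> K \<and> gen_field K \<alpha> = UNIV}"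

end

theory Submission
  imports Defs "HOL-Algebra.Algebraic_Closure_Type"
begin

(* Since K(\<alpha>1) = K(\<alpha>2) = L has degree p, the powers 1, \<alpha>2, ..., \<alpha>2^(p-1) form a K-basis of L.
  Reducing modulo X^p - \<alpha>2^p shows that every K-polynomial vanishing at \<alpha>2 also vanishes at
  \<zeta> \<alpha>2; applied to F^p - \<alpha>1^p, where \<alpha>1 = F(\<alpha>2), this gives F(\<zeta> \<alpha>2) = \<zeta>^m \<alpha>1, which
  forces F to be a monomial: \<alpha>1 = d \<alpha>2^k with d \<in> K, and d \<in> A because \<alpha>1, \<alpha>2 are units.
  Now \<alpha>2 = 1 + (\<zz>/\<gamma>2) \<alpha>2' lies in A[\<alpha>2'], and
    \<alpha>1' = \<gamma>1 (d - 1)/\<zz> + d (\<gamma>1/\<gamma>2) \<alpha>2' (1 + \<alpha>2 + ... + \<alpha>2^(k-1)),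
  where v(\<alpha>1 - 1) \<le> v(\<alpha>2 - 1) makes \<gamma>1/\<gamma>2 = \<alpha>1' \<alpha>2'^-1 (\<alpha>2 - 1)/(\<alpha>1 - 1) and the constant
  term integral. *)

(* HOL-Algebra's polynomial constants would otherwise shadow those of HOL-Computational_Algebra. *)
hide_const (open) up_ring.coeff up_ring.monom Polynomials.degree Polynomials.lead_coeff

lemma subring_closed:
  assumes "is_subring S" "x \<in> S" "y \<in> S"
  shows "x + y \<in> S" "x - y \<in> S" "x * y \<in> S"
  using assms unfolding is_subring_def by auto

lemma subring_zero: "is_subring S \<Longrightarrow> 0 \<in> S"
  and subring_one: "is_subring S \<Longrightarrow> 1 \<in> S"
  unfolding is_subring_def by auto

lemma subring_uminus: "is_subring S \<Longrightarrow> x \<in> S \<Longrightarrow> - x \<in> S"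
  using subring_closed(2)[OF _ subring_zero] by fastforce

lemma subring_power: "is_subring S \<Longrightarrow> x \<in> S \<Longrightarrow> x ^ n \<in> S"
  by (induct n) (auto simp: subring_one subring_closed)

lemma subring_sum: "is_subring S \<Longrightarrow> (\<And>i. i \<in> I \<Longrightarrow> f i \<in> S) \<Longrightarrow> sum f I \<in> S"
  by (induct I rule: infinite_finite_induct) (auto simp: subring_zero subring_closed)

lemma subring_Int: "is_subring S \<Longrightarrow> is_subring T \<Longrightarrow> is_subring (S \<inter> T)"
  unfolding is_subring_def by auto

lemma subfield_divide: "is_subfield K \<Longrightarrow> x \<in> K \<Longrightarrow> y \<in> K \<Longrightarrow> x / y \<in> K"
  unfolding is_subfield_def by (cases "y = 0") (auto simp: divide_inverse subring_closed subring_zero)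

definition poly_over :: "'a::field set \<Rightarrow> 'a poly \<Rightarrow> bool" where
  "poly_over S f \<longleftrightarrow> (\<forall>i. coeff f i \<in> S)"

lemma poly_over_const: "is_subring S \<Longrightarrow> a \<in> S \<Longrightarrow> poly_over S [:a:]"
  by (auto simp: poly_over_def coeff_pCons subring_zero split: nat.split)

lemma poly_over_monom: "is_subring S \<Longrightarrow> a \<in> S \<Longrightarrow> poly_over S (monom a n)"
  by (auto simp: poly_over_def coeff_monom subring_zero)

lemma poly_over_add: "is_subring S \<Longrightarrow> poly_over S f \<Longrightarrow> poly_over S g \<Longrightarrow> poly_over S (f + g)"
  and poly_over_diff: "is_subring S \<Longrightarrow> poly_over S f \<Longrightarrow> poly_over S g \<Longrightarrow> poly_over S (f - g)"
  by (auto simp: poly_over_def subring_closed)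

lemma poly_over_mult: "is_subring S \<Longrightarrow> poly_over S f \<Longrightarrow> poly_over S g \<Longrightarrow> poly_over S (f * g)"
  by (auto simp: poly_over_def coeff_mult intro!: subring_sum subring_closed)

lemma poly_over_one: "is_subring S \<Longrightarrow> poly_over S 1"
  by (simp add: poly_over_def coeff_1 subring_zero subring_one)

lemma poly_over_power: "is_subring S \<Longrightarrow> poly_over S f \<Longrightarrow> poly_over S (f ^ n)"
  by (induct n) (auto simp: poly_over_mult poly_over_one)

lemma poly_over_sum: "is_subring S \<Longrightarrow> (\<And>i. i \<in> I \<Longrightarrow> poly_over S (f i)) \<Longrightarrow> poly_over S (sum f I)"
  by (induct I rule: infinite_finite_induct) (auto simp: poly_over_def subring_zero subring_closed)

lemma adjoin_poly_over: "adjoin A x = {poly q x | q. poly_over A q}"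
  by (simp add: adjoin_def poly_over_def)

lemma poly_mem_adjoin: "poly_over A q \<Longrightarrow> poly q x \<in> adjoin A x"
  unfolding adjoin_poly_over by blast

lemma is_subring_adjoin:
  assumes A: "is_subring A"
  shows "is_subring (adjoin A x)"
proof -
  have "y + z \<in> adjoin A x \<and> y - z \<in> adjoin A x \<and> y * z \<in> adjoin A x"
    if "y \<in> adjoin A x" and "z \<in> adjoin A x" for y z
  proof -
    obtain q r where qr: "poly_over A q" "poly_over A r" and "y = poly q x" "z = poly r x"
      using \<open>y \<in> adjoin A x\<close> \<open>z \<in> adjoin A x\<close> unfolding adjoin_poly_over by blast
    then have "y + z = poly (q + r) x" "y - z = poly (q - r) x" "y * z = poly (q * r) x" by simp_all
    then show ?thesis
      using poly_mem_adjoin poly_over_add[OF A qr] poly_over_diff[OF A qr] poly_over_mult[OF A qr] by metis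
  qed
  moreover have "0 \<in> adjoin A x" "1 \<in> adjoin A x"
    using poly_mem_adjoin[OF poly_over_const[OF A subring_zero[OF A]]]
      poly_mem_adjoin[OF poly_over_one[OF A]] by simp_all
  ultimately show ?thesis unfolding is_subring_def[of "adjoin A x"] by blast
qed

lemma subset_adjoin: "is_subring A \<Longrightarrow> A \<subseteq> adjoin A x"
  using poly_mem_adjoin[OF poly_over_const] by fastforce

lemma generator_mem_adjoin: "is_subring A \<Longrightarrow> x \<in> adjoin A x"
  using poly_mem_adjoin[of A "[:0, 1:]" x]
  by (simp add: poly_over_def coeff_pCons subring_zero subring_one split: nat.split)

lemma adjoin_subset_adjoin:
  assumes A: "is_subring A" and y: "y \<in> adjoin A x"
  shows "adjoin A y \<subseteq> adjoin A x"
proof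
  fix z assume "z \<in> adjoin A y"
  then obtain q where "poly_over A q" "z = (\<Sum>i\<le>degree q. coeff q i * y ^ i)"
    unfolding adjoin_poly_over by (auto simp: poly_altdef)
  then show "z \<in> adjoin A x"
    using is_subring_adjoin[OF A] subset_adjoin[OF A] y
    by (auto simp: poly_over_def intro!: subring_sum subring_closed subring_power)
qed

lemma integral_closure_mono: "S \<subseteq> T \<Longrightarrow> integral_closure S \<subseteq> integral_closure T"
  unfolding integral_closure_def by blast

lemma valuation_ring_integrally_closed:
  assumes V: "is_valuation_ring Ov"
  shows "integral_closure Ov \<subseteq> Ov"
proof
  fix x assume "x \<in> integral_closure Ov"
  then obtain f where f: "\<forall>i. coeff f i \<in> Ov" "lead_coeff f = 1" "poly f x = 0"
    unfolding integral_closure_def by blast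
  have S: "is_subring Ov" using V by (simp add: is_valuation_ring_def)
  show "x \<in> Ov"
  proof (rule ccontr)
    assume "x \<notin> Ov"
    moreover from this have "x \<noteq> 0" using subring_zero[OF S] by auto
    ultimately have y: "inverse x \<in> Ov" using V unfolding is_valuation_ring_def by blast
    define n where "n = degree f"
    have "n > 0" using f(2,3) by (cases "degree f") (auto simp: n_def poly_altdef)
    have "0 = (\<Sum>i<n. coeff f i * x ^ i) + x ^ n"
      using f(2,3) by (simp add: poly_altdef n_def lessThan_Suc_atMost[symmetric])
    then have "x = - (\<Sum>i<n. coeff f i * x ^ i) * inverse x ^ (n - 1)"
      using \<open>n > 0\<close> \<open>x \<noteq> 0\<close> by (cases n) (auto simp: power_inverse field_simps eq_neg_iff_add_eq_0)
    also have "\<dots> = - (\<Sum>i<n. coeff f i * (x ^ i * inverse x ^ (n - 1)))"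
      by (simp add: sum_distrib_right mult.assoc)
    also have "\<dots> = - (\<Sum>i<n. coeff f i * inverse x ^ (n - 1 - i))"
    proof (intro arg_cong[where f = uminus] sum.cong refl)
      fix i assume "i \<in> {..<n}"
      then have "inverse x ^ (n - 1) = inverse x ^ i * inverse x ^ (n - 1 - i)"
        by (simp add: power_add[symmetric])
      then show "coeff f i * (x ^ i * inverse x ^ (n - 1)) = coeff f i * inverse x ^ (n - 1 - i)"
        using \<open>x \<noteq> 0\<close> by (simp add: power_inverse field_simps)
    qed
    also have "\<dots> \<in> Ov"
      using f(1) y by (intro subring_uminus[OF S] subring_sum[OF S] subring_closed(3)[OF S] subring_power[OF S]) auto
    finally show False using \<open>x \<notin> Ov\<close> by contradiction
  qed
qed

lemma valuation_ring_root:
  assumes V: "is_valuation_ring Ov" and "p > 0" and "z ^ p \<in> Ov"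
  shows "z \<in> Ov"
proof -
  let ?f = "monom 1 p + [:- (z ^ p):]"
  have S: "is_subring Ov" using V by (simp add: is_valuation_ring_def)
  have "- (z ^ p) \<in> Ov" using subring_uminus[OF S assms(3)] .
  have "degree ?f = p" using \<open>p > 0\<close> by (subst degree_add_eq_left) (auto simp: degree_monom_eq)
  then have "z \<in> integral_closure Ov"
    using \<open>p > 0\<close> \<open>- (z ^ p) \<in> Ov\<close> unfolding integral_closure_def
    by (auto intro!: exI[of _ ?f] simp: coeff_monom poly_monom coeff_pCons subring_zero[OF S]
        subring_one[OF S] split: nat.split)
  then show ?thesis using valuation_ring_integrally_closed[OF V] by blast
qed

definition is_basis_over :: "'a::field set \<Rightarrow> nat \<Rightarrow> (nat \<Rightarrow> 'a) \<Rightarrow> bool" where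
  "is_basis_over K n b \<longleftrightarrow>
     (\<forall>c. (\<forall>i<n. c i \<in> K) \<and> (\<Sum>i<n. c i * b i) = 0 \<longrightarrow> (\<forall>i<n. c i = 0)) \<and>
     (\<forall>x. \<exists>c. (\<forall>i<n. c i \<in> K) \<and> x = (\<Sum>i<n. c i * b i))"

lemma ext_degree_is_iff_basis: "ext_degree_is K n \<longleftrightarrow> (\<exists>b. is_basis_over K n b)"
  unfolding ext_degree_is_def is_basis_over_def ..

lemma is_basis_over_independent:
  "is_basis_over K n b \<Longrightarrow> \<forall>i<n. c i \<in> K \<Longrightarrow> (\<Sum>i<n. c i * b i) = 0 \<Longrightarrow> i < n \<Longrightarrow> c i = 0"
  unfolding is_basis_over_def by blast

lemma is_basis_over_spans: "is_basis_over K n b \<Longrightarrow> \<exists>c. (\<forall>i<n. c i \<in> K) \<and> x = (\<Sum>i<n. c i * b i)"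
  unfolding is_basis_over_def by blast

lemma is_basis_over_cong:
  assumes "\<And>i. i < n \<Longrightarrow> b i = b' i"
  shows "is_basis_over K n b \<longleftrightarrow> is_basis_over K n b'"
proof -
  have "(\<Sum>i<n. c i * b i) = (\<Sum>i<n. c i * b' i)" for c
    using assms by (intro sum.cong) auto
  then show ?thesis unfolding is_basis_over_def by simp
qed

lemma is_basis_over_reflect:
  assumes basis: "is_basis_over K n b"
  shows "is_basis_over K n (\<lambda>i. b (n - Suc i))"
proof -
  have reflect: "(\<Sum>i<n. c i * b (n - Suc i)) = (\<Sum>i<n. c (n - Suc i) * b i)" for c
    using sum.nat_diff_reindex[of "\<lambda>i. c (n - Suc i) * b i" n] by (simp add: Suc_diff_Suc)
  have "\<forall>i<n. c i = 0" if "\<forall>i<n. c i \<in> K" "(\<Sum>i<n. c i * b (n - Suc i)) = 0" for c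
  proof (intro allI impI)
    fix i assume "i < n"
    then have "c (n - Suc (n - Suc i)) = 0"
      by (intro is_basis_over_independent[OF basis, of "\<lambda>i. c (n - Suc i)"]) (use that in \<open>simp_all add: reflect\<close>)
    then show "c i = 0" using \<open>i < n\<close> by (simp add: Suc_diff_Suc)
  qed
  moreover have "\<exists>c. (\<forall>i<n. c i \<in> K) \<and> x = (\<Sum>i<n. c i * b (n - Suc i))" for x
  proof -
    obtain c where "\<forall>i<n. c i \<in> K" "x = (\<Sum>i<n. c i * b i)"
      using is_basis_over_spans[OF basis] by blast
    then show ?thesis
      by (intro exI[of _ "\<lambda>i. c (n - Suc i)"]) (simp add: reflect Suc_diff_Suc)
  qed
  ultimately show ?thesis unfolding is_basis_over_def by blast
qed

(* The field 'a as a ring record, to use the dimension theory of HOL-Algebra's Embedded_Algebras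
  and Finite_Extensions. *)
abbreviation type_ring :: "'a::field ring" where "type_ring \<equiv> ring_of_type_algebra"

interpretation L: domain "type_ring :: 'a::field ring"
  using field_from_type_algebra by (rule field.axioms(1))

lemma type_ring_simps [simp]:
  "carrier (type_ring :: 'a::field ring) = UNIV"
  "x \<otimes>\<^bsub>(type_ring :: 'a ring)\<^esub> y = x * y"
  "x \<oplus>\<^bsub>(type_ring :: 'a ring)\<^esub> y = x + y"
  "\<zero>\<^bsub>(type_ring :: 'a ring)\<^esub> = 0"
  "\<one>\<^bsub>(type_ring :: 'a ring)\<^esub> = 1"
  by (simp_all add: ring_of_type_algebra_def)

lemma type_ring_minus [simp]: "\<ominus>\<^bsub>(type_ring :: 'a::field ring)\<^esub> x = - x"
  by (rule L.minus_equality) auto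

lemma type_ring_inv: "(x :: 'a::field) \<noteq> 0 \<Longrightarrow> inv\<^bsub>type_ring\<^esub> x = inverse x"
  by (rule L.comm_inv_char) auto

lemma type_ring_pow [simp]: "x [^]\<^bsub>(type_ring :: 'a::field ring)\<^esub> (n::nat) = x ^ n"
  by (induct n) (auto simp: mult.commute)

lemma is_subfield_iff_subfield: "is_subfield K \<longleftrightarrow> subfield K (type_ring :: 'a::field ring)"
proof
  assume K: "is_subfield K"
  have "subring K type_ring"
    by (rule L.subringI) (use K in \<open>auto simp: is_subfield_def is_subring_def diff_0[symmetric] simp del: diff_0\<close>)
  then show "subfield K type_ring"
    by (rule field.subfieldI'[OF field_from_type_algebra]) (use K in \<open>auto simp: is_subfield_def type_ring_inv\<close>)
next
  assume F: "subfield K type_ring"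
  note E = subringE[OF subfieldE(1)[OF F], simplified]
  have "x - y \<in> K" if "x \<in> K" "y \<in> K" for x y
    using E(5)[OF that(2)] E(7)[OF that(1)] by (simp add: diff_conv_add_uminus del: add_uminus_conv_diff)
  moreover have "inverse x \<in> K" if "x \<in> K" "x \<noteq> 0" for x
    using L.subfield_m_inv(1)[OF F, of x] that by (auto simp: type_ring_inv)
  ultimately show "is_subfield K" unfolding is_subfield_def is_subring_def using E by auto
qed

lemma combine_eq_sum:
  "L.combine Ks Us = (\<Sum>i<min (length Ks) (length Us). Ks ! i * Us ! i)"
proof (induct Ks arbitrary: Us)
  case (Cons k Ks Us)
  then show ?case
    by (cases Us) (simp_all only: length_Cons min_Suc_Suc sum.lessThan_Suc_shift, simp_all)
qed simp

lemma is_basis_over_iff_independent_Span: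
  fixes Us :: "'a::field list"
  assumes K: "is_subfield K"
  shows "is_basis_over K (length Us) (\<lambda>i. Us ! i) \<longleftrightarrow> L.independent K Us \<and> L.Span K Us = UNIV"
proof -
  let ?n = "length Us"
  have Ks: "subfield K type_ring" using K by (simp add: is_subfield_iff_subfield)
  have combine: "L.combine (map c [0..<?n]) Us = (\<Sum>i<?n. c i * Us ! i)" for c
    by (simp add: combine_eq_sum)
  have "L.independent K Us \<longleftrightarrow> (\<forall>c. (\<forall>i<?n. c i \<in> K) \<and> (\<Sum>i<?n. c i * Us ! i) = 0 \<longrightarrow> (\<forall>i<?n. c i = 0))"
  proof
    assume indep: "L.independent K Us"
    show "\<forall>c. (\<forall>i<?n. c i \<in> K) \<and> (\<Sum>i<?n. c i * Us ! i) = 0 \<longrightarrow> (\<forall>i<?n. c i = 0)"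
    proof (intro allI impI, elim conjE)
      fix c i assume "\<forall>i<?n. c i \<in> K" "(\<Sum>i<?n. c i * Us ! i) = 0" "i < ?n"
      then have "set (map c [0..<?n]) \<subseteq> K" "L.combine (map c [0..<?n]) Us = \<zero>\<^bsub>type_ring\<^esub>"
        by (auto simp: combine)
      then have "set (take ?n (map c [0..<?n])) \<subseteq> {\<zero>\<^bsub>type_ring\<^esub>}"
        by (rule L.independent_imp_trivial_combine[OF Ks indep])
      then show "c i = 0" using \<open>i < ?n\<close> by (auto simp: image_subset_iff)
    qed
  next
    assume triv: "\<forall>c. (\<forall>i<?n. c i \<in> K) \<and> (\<Sum>i<?n. c i * Us ! i) = 0 \<longrightarrow> (\<forall>i<?n. c i = 0)"
    show "L.independent K Us"
    proof (rule L.trivial_combine_imp_independent[OF Ks])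
      fix Ks' assume Ks': "set Ks' \<subseteq> K" and "L.combine Ks' Us = \<zero>\<^bsub>type_ring\<^esub>"
      define c where "c i = (if i < length Ks' then Ks' ! i else 0)" for i
      have "(\<Sum>i<?n. c i * Us ! i) = L.combine Ks' Us"
        by (simp add: combine_eq_sum c_def) (rule sum.mono_neutral_cong_right; auto)
      moreover have "\<forall>i<?n. c i \<in> K"
        using Ks' K by (auto simp: c_def is_subfield_def is_subring_def)
      ultimately have "\<forall>i<?n. c i = 0" using triv \<open>L.combine Ks' Us = _\<close> by simp
      then show "set (take ?n Ks') \<subseteq> {\<zero>\<^bsub>type_ring\<^esub>}"
        by (auto simp: in_set_conv_nth c_def) metis
    qed simp
  qed
  moreover have "x \<in> L.Span K Us \<longleftrightarrow> (\<exists>c. (\<forall>i<?n. c i \<in> K) \<and> x = (\<Sum>i<?n. c i * Us ! i))" for x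
  proof -
    have "x \<in> L.Span K Us \<longleftrightarrow> (\<exists>Ks'. set Ks' \<subseteq> K \<and> length Ks' = ?n \<and> x = L.combine Ks' Us)"
      by (rule L.Span_mem_iff_length_version[OF Ks]) simp
    also have "\<dots> \<longleftrightarrow> (\<exists>c. (\<forall>i<?n. c i \<in> K) \<and> x = (\<Sum>i<?n. c i * Us ! i))"
    proof
      assume "\<exists>Ks'. set Ks' \<subseteq> K \<and> length Ks' = ?n \<and> x = L.combine Ks' Us"
      then obtain Ks' where "set Ks' \<subseteq> K" "length Ks' = ?n" "x = L.combine Ks' Us" by blast
      then show "\<exists>c. (\<forall>i<?n. c i \<in> K) \<and> x = (\<Sum>i<?n. c i * Us ! i)"
        by (intro exI[of _ "\<lambda>i. Ks' ! i"]) (auto simp: combine_eq_sum)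
    next
      assume "\<exists>c. (\<forall>i<?n. c i \<in> K) \<and> x = (\<Sum>i<?n. c i * Us ! i)"
      then obtain c where "\<forall>i<?n. c i \<in> K" "x = (\<Sum>i<?n. c i * Us ! i)" by blast
      then show "\<exists>Ks'. set Ks' \<subseteq> K \<and> length Ks' = ?n \<and> x = L.combine Ks' Us"
        by (intro exI[of _ "map c [0..<?n]"]) (auto simp: combine)
    qed
    finally show ?thesis .
  qed
  ultimately show ?thesis unfolding is_basis_over_def by blast
qed

lemma exp_base_nth: "i < n \<Longrightarrow> L.exp_base a n ! i = (a :: 'a::field) ^ (n - Suc i)"
  by (simp add: L.exp_base_def rev_nth)

lemma ext_degree_power_basis:
  fixes a :: "'a::field"
  assumes K: "is_subfield K" and deg: "ext_degree_is K n" and gen: "gen_field K a = UNIV"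
  shows "is_basis_over K n (\<lambda>i. a ^ i)"
proof -
  have Ks: "subfield K type_ring" using K by (simp add: is_subfield_iff_subfield)
  have a: "a \<in> carrier type_ring" by simp
  obtain b where "is_basis_over K n b" using deg by (auto simp: ext_degree_is_iff_basis)
  then have "is_basis_over K (length (map b [0..<n])) (\<lambda>i. map b [0..<n] ! i)"
    by (subst is_basis_over_cong) auto
  then have "L.independent K (map b [0..<n]) \<and> L.Span K (map b [0..<n]) = UNIV"
    unfolding is_basis_over_iff_independent_Span[OF K] .
  then have "L.dimension (length (map b [0..<n])) K UNIV"
    by (intro L.dimensionI[OF Ks]) simp_all
  then have dim: "L.dimension n K UNIV" by simp
  have alg: "(L.algebraic over K) a"
    using L.finite_dimension_imp_algebraic[OF Ks L.carrier_is_subring] L.finite_dimensionI[of n K] dim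
    by simp
  have "gen_field K a \<subseteq> L.simple_extension K a"
    unfolding gen_field_def
  proof (rule Inter_lower, safe)
    show "is_subfield (L.simple_extension K a)"
      using L.simple_extension_is_subfield[OF Ks] alg by (simp add: is_subfield_iff_subfield)
    show "a \<in> L.simple_extension K a"
      using L.simple_extension_mem[OF subfieldE(1)[OF Ks]] by simp
  qed (use L.simple_extension_incl[of K a] in auto)
  then have ext: "L.simple_extension K a = UNIV" using gen by auto
  have "L.dimension (Polynomials.degree (L.Irr K a)) K UNIV"
    using L.dimension_simple_extension[OF Ks a alg] ext by simp
  then have Irr: "Polynomials.degree (L.Irr K a) = n"
    using L.dimension_is_inj[OF Ks _ dim] by blast
  have len: "length (L.exp_base a n) = n" by (simp add: L.exp_base_def)
  have "L.independent K (L.exp_base a n)"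
    using L.exp_base_independent[OF Ks a alg] unfolding Irr .
  moreover have "L.Span K (L.exp_base a n) = UNIV"
    using L.Span_exp_base[OF Ks a alg] unfolding Irr ext .
  ultimately have "is_basis_over K (length (L.exp_base a n)) (\<lambda>i. L.exp_base a n ! i)"
    unfolding is_basis_over_iff_independent_Span[OF K] by blast
  then have "is_basis_over K n (\<lambda>i. a ^ (n - Suc i))"
    unfolding len by (rule is_basis_over_cong[THEN iffD1, rotated]) (rule exp_base_nth)
  then have "is_basis_over K n (\<lambda>i. a ^ (n - Suc (n - Suc i)))"
    by (rule is_basis_over_reflect)
  then show ?thesis
    by (rule is_basis_over_cong[THEN iffD1, rotated]) (metis Suc_diff_Suc diff_diff_cancel less_imp_le_nat)
qed

lemma primitive_root_power_inj:
  fixes \<zeta> :: "'a::field"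
  assumes prim: "\<forall>k. 0 < k \<and> k < p \<longrightarrow> \<zeta> ^ k \<noteq> 1" and "\<zeta> \<noteq> 0"
    and "i < p" "j < p" "\<zeta> ^ i = \<zeta> ^ j"
  shows "i = j"
proof (rule ccontr)
  have unit: "\<zeta> ^ (l - k) = 1" if "k < l" "\<zeta> ^ k = \<zeta> ^ l" for k l
    using that \<open>\<zeta> \<noteq> 0\<close> by (simp add: power_diff)
  assume "i \<noteq> j"
  then consider "i < j" | "j < i" by linarith
  then show False
  proof cases
    case 1 then show False using unit[of i j] prim assms(4,5) by simp
  next
    case 2 then show False using unit[of j i] prim assms(3,5) by simp
  qed
qed

lemma root_of_unity_eq_primitive_power:
  fixes \<zeta> w :: "'a::field"
  assumes "p > 0" "\<zeta> ^ p = 1" and prim: "\<forall>k. 0 < k \<and> k < p \<longrightarrow> \<zeta> ^ k \<noteq> 1" and "w ^ p = 1"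
  shows "\<exists>m<p. w = \<zeta> ^ m"
proof (rule ccontr)
  assume new: "\<not> (\<exists>m<p. w = \<zeta> ^ m)"
  define P :: "'a poly" where "P = monom 1 p - 1"
  have "\<zeta> \<noteq> 0" using assms(1,2) by (auto simp: power_0_left)
  have "coeff P p = 1" using \<open>p > 0\<close> by (simp add: P_def)
  then have "P \<noteq> 0" by auto
  have "(\<zeta> ^ m) ^ p = 1" for m by (metis power_mult mult.commute \<open>\<zeta> ^ p = 1\<close> power_one)
  then have "insert w ((\<lambda>m. \<zeta> ^ m) ` {..<p}) \<subseteq> {x. poly P x = 0}"
    using \<open>w ^ p = 1\<close> by (auto simp: P_def poly_monom)
  then have "card (insert w ((\<lambda>m. \<zeta> ^ m) ` {..<p})) \<le> card {x. poly P x = 0}"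
    by (rule card_mono[OF poly_roots_finite[OF \<open>P \<noteq> 0\<close>]])
  moreover have "card (insert w ((\<lambda>m. \<zeta> ^ m) ` {..<p})) = Suc p"
    using new primitive_root_power_inj[OF prim \<open>\<zeta> \<noteq> 0\<close>]
    by (subst card_insert_disjoint) (auto simp: card_image inj_on_def)
  moreover have "degree P \<le> p" unfolding P_def by (intro degree_diff_le degree_monom_le) simp
  ultimately show False using card_poly_roots_bound[OF \<open>P \<noteq> 0\<close>] by simp
qed

(* The coefficient of X^i in the remainder of G modulo X^p - h. *)
definition rem_binomial_coeff :: "'a::field poly \<Rightarrow> nat \<Rightarrow> 'a \<Rightarrow> nat \<Rightarrow> 'a" where
  "rem_binomial_coeff G p h i = (\<Sum>n\<le>degree G. if n mod p = i then coeff G n * h ^ (n div p) else 0)"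

lemma poly_eq_rem_binomial:
  fixes y :: "'a::field"
  assumes "p > 0" "y ^ p = h"
  shows "poly G y = (\<Sum>i<p. rem_binomial_coeff G p h i * y ^ i)"
proof -
  have summand: "(\<Sum>i<p. if n mod p = i then coeff G n * h ^ (n div p) * y ^ i else 0) = coeff G n * y ^ n"
    for n
  proof -
    have "y ^ n = y ^ (n mod p + p * (n div p))" by simp
    also have "\<dots> = h ^ (n div p) * y ^ (n mod p)"
      unfolding power_add power_mult \<open>y ^ p = h\<close> by (rule mult.commute)
    finally have yn: "y ^ n = h ^ (n div p) * y ^ (n mod p)" .
    have "(\<Sum>i<p. if n mod p = i then coeff G n * h ^ (n div p) * y ^ i else 0)
        = coeff G n * h ^ (n div p) * y ^ (n mod p)"
      using \<open>p > 0\<close> by (simp add: sum.delta)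
    also have "\<dots> = coeff G n * y ^ n" by (simp only: yn mult.assoc)
    finally show ?thesis .
  qed
  have "poly G y = (\<Sum>n\<le>degree G. \<Sum>i<p. if n mod p = i then coeff G n * h ^ (n div p) * y ^ i else 0)"
    by (simp only: summand poly_altdef)
  also have "\<dots> = (\<Sum>i<p. rem_binomial_coeff G p h i * y ^ i)"
    unfolding rem_binomial_coeff_def sum_distrib_right by (subst sum.swap) (intro sum.cong refl, simp)
  finally show ?thesis .
qed

lemma poly_over_rem_binomial_coeff:
  "is_subring K \<Longrightarrow> poly_over K G \<Longrightarrow> h \<in> K \<Longrightarrow> rem_binomial_coeff G p h i \<in> K"
  unfolding rem_binomial_coeff_def poly_over_def
  by (auto intro!: subring_sum subring_closed subring_power simp: subring_zero)

lemma conjugate_root: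
  assumes K: "is_subfield K" and basis: "is_basis_over K p (\<lambda>i. a ^ i)" and "p > 0"
    and "h \<in> K" "a ^ p = h" "w ^ p = h" and G: "poly_over K G" "poly G a = 0"
  shows "poly G w = 0"
proof -
  have S: "is_subring K" using K by (simp add: is_subfield_def)
  have "\<forall>i<p. rem_binomial_coeff G p h i \<in> K"
    using poly_over_rem_binomial_coeff[OF S G(1) \<open>h \<in> K\<close>] by blast
  moreover have "(\<Sum>i<p. rem_binomial_coeff G p h i * a ^ i) = 0"
    using poly_eq_rem_binomial[OF \<open>p > 0\<close> \<open>a ^ p = h\<close>] G(2) by simp
  ultimately have "\<forall>i<p. rem_binomial_coeff G p h i = 0"
    using is_basis_over_independent[OF basis] by blast
  then show ?thesis using poly_eq_rem_binomial[OF \<open>p > 0\<close> \<open>w ^ p = h\<close>] by simp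
qed

lemma kummer_power_relation:
  fixes a b \<zeta> :: "'a::field"
  assumes K: "is_subfield K" and basis: "is_basis_over K p (\<lambda>i. a ^ i)" and "p > 0"
    and \<zeta>: "\<zeta> \<in> K" "\<zeta> ^ p = 1" "\<forall>k. 0 < k \<and> k < p \<longrightarrow> \<zeta> ^ k \<noteq> 1"
    and "a ^ p \<in> K" "b ^ p \<in> K"
  shows "\<exists>d\<in>K. \<exists>k. b = d * a ^ k"
proof (cases "b = 0")
  case True
  then show ?thesis using K by (auto simp: is_subfield_def is_subring_def)
next
  case False
  have S: "is_subring K" using K by (simp add: is_subfield_def)
  obtain c where cK: "\<forall>i<p. c i \<in> K" and b: "b = (\<Sum>i<p. c i * a ^ i)"
    using is_basis_over_spans[OF basis] by blast
  define F where "F = (\<Sum>i<p. monom (c i) i)"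
  have poly_F: "poly F y = (\<Sum>i<p. c i * y ^ i)" for y by (simp add: F_def poly_sum poly_monom)
  have "poly (F ^ p - [:b ^ p:]) (\<zeta> * a) = 0"
  proof (rule conjugate_root[OF K basis \<open>p > 0\<close> \<open>a ^ p \<in> K\<close> refl])
    show "(\<zeta> * a) ^ p = a ^ p" by (simp add: power_mult_distrib \<zeta>(2))
    show "poly_over K (F ^ p - [:b ^ p:])" unfolding F_def
      using cK \<open>b ^ p \<in> K\<close> by (auto intro!: poly_over_diff[OF S] poly_over_power[OF S] poly_over_sum[OF S]
          poly_over_monom[OF S] poly_over_const[OF S])
    show "poly (F ^ p - [:b ^ p:]) a = 0" by (simp add: poly_F b)
  qed
  then have "(poly F (\<zeta> * a) / b) ^ p = 1" using False by (simp add: power_divide)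
  then obtain m where "m < p" and "poly F (\<zeta> * a) / b = \<zeta> ^ m"
    using root_of_unity_eq_primitive_power[OF \<open>p > 0\<close> \<zeta>(2,3)] by blast
  then have "(\<Sum>i<p. (c i * \<zeta> ^ i - \<zeta> ^ m * c i) * a ^ i) = 0"
    using False by (simp add: poly_F b field_simps sum_subtractf sum_distrib_left power_mult_distrib)
  then have "c i * (\<zeta> ^ i - \<zeta> ^ m) = 0" if "i < p" for i
    using is_basis_over_independent[OF basis, of "\<lambda>i. c i * \<zeta> ^ i - \<zeta> ^ m * c i" i] that cK \<zeta>(1)
    by (simp add: algebra_simps subring_closed[OF S] subring_power[OF S])
  moreover have "\<zeta> ^ i \<noteq> \<zeta> ^ m" if "i < p" "i \<noteq> m" for i
  proof -
    have "\<zeta> \<noteq> 0" using \<zeta>(2) \<open>p > 0\<close> by (metis power_0_left zero_neq_one not_gr0)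
    then show ?thesis using primitive_root_power_inj[OF \<zeta>(3), of i m] that \<open>m < p\<close> by blast
  qed
  ultimately have "c i = 0" if "i < p" "i \<noteq> m" for i using that by (metis mult_eq_0_iff right_minus_eq)
  then have "b = c m * a ^ m" unfolding b using \<open>m < p\<close> by (simp add: sum.remove[of _ m] sum.neutral)
  then show ?thesis using cK \<open>m < p\<close> by blast
qed

lemma units_in_mono: "R \<subseteq> S \<Longrightarrow> units_in R \<subseteq> units_in S"
  unfolding units_in_def by blast

lemma mem_adjoin_scaled_difference:
  assumes V: "is_valuation_ring Ov" and K: "is_subfield K"
    and "\<gamma> \<in> K" "z \<in> K" "\<alpha> \<in> Ov" and u: "\<gamma> * (\<alpha> - 1) / z \<in> units_in Ov"
  shows "\<alpha> \<in> adjoin (Ov \<inter> K) (\<gamma> * (\<alpha> - 1) / z)"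
proof -
  define u where "u = \<gamma> * (\<alpha> - 1) / z"
  have SO: "is_subring Ov" using V by (simp add: is_valuation_ring_def)
  have SA: "is_subring (Ov \<inter> K)" using SO K by (simp add: subring_Int is_subfield_def)
  have "u \<noteq> 0" "inverse u \<in> Ov" using u by (simp_all add: u_def units_in_def)
  then have "\<gamma> \<noteq> 0" "z \<noteq> 0" "\<alpha> - 1 \<noteq> 0" by (auto simp: u_def)
  have "z / \<gamma> = (\<alpha> - 1) * inverse u"
    using \<open>\<gamma> \<noteq> 0\<close> \<open>z \<noteq> 0\<close> \<open>\<alpha> - 1 \<noteq> 0\<close> by (simp add: u_def field_simps)
  then have "z / \<gamma> \<in> Ov \<inter> K"
    using \<open>\<alpha> \<in> Ov\<close> \<open>inverse u \<in> Ov\<close> subfield_divide[OF K \<open>z \<in> K\<close> \<open>\<gamma> \<in> K\<close>]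
    by (simp add: subring_closed[OF SO] subring_one[OF SO])
  moreover have "\<alpha> = 1 + z / \<gamma> * u" using \<open>\<gamma> \<noteq> 0\<close> \<open>z \<noteq> 0\<close> by (simp add: u_def)
  moreover have "1 + z / \<gamma> * u \<in> adjoin (Ov \<inter> K) u" if "z / \<gamma> \<in> Ov \<inter> K"
    using that subset_adjoin[OF SA] generator_mem_adjoin[OF SA] is_subring_adjoin[OF SA]
    by (blast intro: subring_closed subring_one)
  ultimately show ?thesis unfolding u_def[symmetric] by simp
qed

lemma scaled_difference_mem_adjoin:
  assumes V: "is_valuation_ring Ov" and K: "is_subfield K"
    and "\<gamma>1 \<in> K" "\<gamma>2 \<in> K" "z \<in> K" and d: "d \<in> Ov \<inter> K" "\<alpha>1 = d * \<alpha>2 ^ k"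
    and a2: "\<alpha>2 \<in> units_in Ov"
    and u1: "\<gamma>1 * (\<alpha>1 - 1) / z \<in> Ov" and u2: "\<gamma>2 * (\<alpha>2 - 1) / z \<in> units_in Ov"
    and le: "val_le Ov (\<alpha>1 - 1) (\<alpha>2 - 1)"
  shows "\<gamma>1 * (\<alpha>1 - 1) / z \<in> adjoin (Ov \<inter> K) (\<gamma>2 * (\<alpha>2 - 1) / z)"
proof -
  define x1 x2 where "x1 = \<alpha>1 - 1" and "x2 = \<alpha>2 - 1"
  define u1 u2 where "u1 = \<gamma>1 * x1 / z" and "u2 = \<gamma>2 * x2 / z"
  define s where "s = (\<Sum>j<k. \<alpha>2 ^ j)"
  have SO: "is_subring Ov" using V by (simp add: is_valuation_ring_def)
  have SK: "is_subring K" using K by (simp add: is_subfield_def)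
  have SA: "is_subring (Ov \<inter> K)" using SO SK by (rule subring_Int)
  have R: "is_subring (adjoin (Ov \<inter> K) u2)" using SA by (rule is_subring_adjoin)
  have "u2 \<noteq> 0" "inverse u2 \<in> Ov" using u2 by (simp_all add: u2_def x2_def units_in_def)
  then have "\<gamma>2 \<noteq> 0" "z \<noteq> 0" "x2 \<noteq> 0" by (auto simp: u2_def)
  have "\<alpha>2 \<in> Ov" "\<alpha>2 \<noteq> 0" "inverse \<alpha>2 \<in> Ov" using a2 by (simp_all add: units_in_def)
  have "\<alpha>2 \<in> adjoin (Ov \<inter> K) u2"
    unfolding u2_def x2_def by (rule mem_adjoin_scaled_difference) (use assms \<open>\<alpha>2 \<in> Ov\<close> in auto)
  then have s: "s \<in> adjoin (Ov \<inter> K) u2" unfolding s_def by (intro subring_sum[OF R] subring_power[OF R])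
  have "u1 \<in> Ov" using u1 unfolding u1_def x1_def .
  have "s \<in> Ov" unfolding s_def using \<open>\<alpha>2 \<in> Ov\<close> by (intro subring_sum[OF SO] subring_power[OF SO])
  have "\<alpha>2 ^ k - 1 = x2 * s" unfolding x2_def s_def by (rule power_diff_1_eq)
  then have x1: "x1 = (d - 1) * \<alpha>2 ^ k + x2 * s" and x1': "x1 = (d - 1) + d * (x2 * s)"
    using d(2) by (simp_all add: x1_def algebra_simps)
  show ?thesis
    unfolding x1_def[symmetric] x2_def[symmetric] u1_def[symmetric] u2_def[symmetric]
  proof (cases "x1 = 0")
    case True
    then show "u1 \<in> adjoin (Ov \<inter> K) u2" using subring_zero[OF R] by (simp add: u1_def)
  next
    case False
    then have r: "x2 / x1 \<in> Ov" using le by (simp add: val_le_def x1_def x2_def)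
    have "\<gamma>1 / \<gamma>2 = u1 * inverse u2 * (x2 / x1)"
      using False \<open>\<gamma>2 \<noteq> 0\<close> \<open>z \<noteq> 0\<close> \<open>x2 \<noteq> 0\<close> by (simp add: u1_def u2_def field_simps)
    also have "\<dots> \<in> Ov"
      using \<open>u1 \<in> Ov\<close> \<open>inverse u2 \<in> Ov\<close> r by (intro subring_closed(3)[OF SO])
    finally have g: "\<gamma>1 / \<gamma>2 \<in> Ov \<inter> K" using subfield_divide[OF K \<open>\<gamma>1 \<in> K\<close> \<open>\<gamma>2 \<in> K\<close>] by simp
    have "\<gamma>1 * (d - 1) / z = \<gamma>1 * (x1 - x2 * s) / (z * \<alpha>2 ^ k)"
      using \<open>\<alpha>2 \<noteq> 0\<close> by (simp add: x1)
    also have "\<dots> = u1 * (1 - x2 / x1 * s) * inverse \<alpha>2 ^ k"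
      using False \<open>\<alpha>2 \<noteq> 0\<close> \<open>z \<noteq> 0\<close> by (simp add: u1_def field_simps power_inverse)
    also have "\<dots> \<in> Ov"
      using \<open>u1 \<in> Ov\<close> r \<open>s \<in> Ov\<close> \<open>inverse \<alpha>2 \<in> Ov\<close>
      by (intro subring_closed(2,3)[OF SO] subring_power[OF SO] subring_one[OF SO])
    finally have c: "\<gamma>1 * (d - 1) / z \<in> Ov \<inter> K"
      using d(1) \<open>\<gamma>1 \<in> K\<close> \<open>z \<in> K\<close>
      by (simp add: subfield_divide[OF K] subring_closed[OF SK] subring_one[OF SK])
    have split: "u1 = \<gamma>1 * (d - 1) / z + d * (\<gamma>1 / \<gamma>2) * u2 * s"
      using \<open>\<gamma>2 \<noteq> 0\<close> \<open>z \<noteq> 0\<close> unfolding u1_def u2_def x1' by (simp add: field_simps)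
    have "\<gamma>1 * (d - 1) / z \<in> adjoin (Ov \<inter> K) u2" "d \<in> adjoin (Ov \<inter> K) u2"
      "\<gamma>1 / \<gamma>2 \<in> adjoin (Ov \<inter> K) u2"
      using subset_adjoin[OF SA] c d(1) g by blast+
    then show "u1 \<in> adjoin (Ov \<inter> K) u2"
      unfolding split using generator_mem_adjoin[OF SA] s by (intro subring_closed[OF R]) auto
  qed
qed

lemma valuation_ring_root_unit:
  assumes V: "is_valuation_ring Ov" and "p > 0" and "z ^ p \<in> units_in Ov"
  shows "z \<in> units_in Ov"
proof -
  have "z ^ p \<in> Ov" "z ^ p \<noteq> 0" "inverse z ^ p \<in> Ov"
    using assms(3) by (simp_all add: units_in_def power_inverse)
  then have "z \<in> Ov" "inverse z \<in> Ov" using valuation_ring_root[OF V \<open>p > 0\<close>] by blast+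
  moreover have "z \<noteq> 0" using \<open>z ^ p \<noteq> 0\<close> \<open>p > 0\<close> by auto
  ultimately show ?thesis by (simp add: units_in_def)
qed

lemma kummer_gens_unit:
  assumes V: "is_valuation_ring Ov" and "p > 0" and "\<alpha> \<in> kummer_gens K Ov p"
  shows "\<alpha> \<in> units_in Ov" "\<alpha> ^ p \<in> K" "gen_field K \<alpha> = UNIV"
proof -
  from assms(3) have "\<alpha> ^ p \<in> units_in (Ov \<inter> K)" and "gen_field K \<alpha> = UNIV"
    unfolding kummer_gens_def by blast+
  then show "\<alpha> ^ p \<in> K" "gen_field K \<alpha> = UNIV" by (simp_all add: units_in_def)
  have "\<alpha> ^ p \<in> units_in Ov"
    using units_in_mono[of "Ov \<inter> K" Ov] \<open>\<alpha> ^ p \<in> units_in (Ov \<inter> K)\<close> by blast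
  then show "\<alpha> \<in> units_in Ov" by (rule valuation_ring_root_unit[OF V \<open>p > 0\<close>])
qed

(* Importing HOL-Algebra makes prime ambiguous in the statement below. *)
hide_const (open) Divisibility.prime

theorem lemma5p3:
  fixes K Ov :: "'a::field_char_0 set" and p :: nat and \<zeta> \<alpha>1 \<alpha>2 \<gamma>1 \<gamma>2 :: 'a
  defines "A \<equiv> Ov \<inter> K"
      and "mA \<equiv> max_ideal Ov \<inter> K"
      and "B \<equiv> integral_closure (Ov \<inter> K)"
      and "\<zz> \<equiv> \<zeta> - 1"
  assumes K_field: "is_subfield K"
      and O_val: "is_valuation_ring Ov"
      and hens: "henselian A mA"
      and p_prime: "prime p"
      and res_char: "of_nat p \<in> mA"
      and zeta: "\<zeta> \<in> K" "\<zeta> ^ p = 1" "\<forall>k. 0 < k \<and> k < p \<longrightarrow> \<zeta> ^ k \<noteq> 1"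
      and kummer: "\<exists>\<alpha>. \<alpha> ^ p \<in> K \<and> gen_field K \<alpha> = UNIV"
      and degree: "ext_degree_is K p"
      and value_index_1: "\<forall>y. y \<noteq> 0 \<longrightarrow> (\<exists>x\<in>K. x \<noteq> 0 \<and> y / x \<in> units_in Ov)"
      and residue_trivial: "\<forall>y\<in>Ov. \<exists>x\<in>A. y - x \<in> max_ideal Ov"
      and a1: "\<alpha>1 \<in> kummer_gens K Ov p" and a2: "\<alpha>2 \<in> kummer_gens K Ov p"
      and g1: "\<gamma>1 \<in> A" "\<gamma>1 * (\<alpha>1 - 1) / \<zz> \<in> units_in B"
      and g2: "\<gamma>2 \<in> A" "\<gamma>2 * (\<alpha>2 - 1) / \<zz> \<in> units_in B"
      and le: "val_le Ov (\<alpha>1 - 1) (\<alpha>2 - 1)"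
  shows "adjoin A (\<gamma>1 * (\<alpha>1 - 1) / \<zz>) \<subseteq> adjoin A (\<gamma>2 * (\<alpha>2 - 1) / \<zz>)"
proof -
  have "p > 0" using p_prime by (simp add: prime_gt_0_nat)
  have SO: "is_subring Ov" and SK: "is_subring K"
    using O_val K_field by (simp_all add: is_valuation_ring_def is_subfield_def)
  note a1' = kummer_gens_unit[OF O_val \<open>p > 0\<close> a1] and a2' = kummer_gens_unit[OF O_val \<open>p > 0\<close> a2]
  obtain d k where "d \<in> K" and d: "\<alpha>1 = d * \<alpha>2 ^ k"
    using kummer_power_relation[OF K_field ext_degree_power_basis[OF K_field degree a2'(3)] \<open>p > 0\<close> zeta
        a2'(2) a1'(2)] by blast
  have "d = \<alpha>1 * inverse \<alpha>2 ^ k" using d a2'(1) by (simp add: units_in_def field_simps power_inverse)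
  then have "d \<in> Ov" using a1'(1) a2'(1) by (simp add: units_in_def subring_closed[OF SO] subring_power[OF SO])
  have "units_in B \<subseteq> units_in Ov"
    unfolding B_def using integral_closure_mono[of "Ov \<inter> K" Ov] valuation_ring_integrally_closed[OF O_val]
    by (intro units_in_mono) blast
  then have "\<gamma>1 * (\<alpha>1 - 1) / \<zz> \<in> Ov" "\<gamma>2 * (\<alpha>2 - 1) / \<zz> \<in> units_in Ov"
    using g1(2) g2(2) by (auto simp: units_in_def)
  moreover have "\<zz> \<in> K" using zeta(1) SK by (simp add: \<zz>_def subring_closed subring_one)
  ultimately have "\<gamma>1 * (\<alpha>1 - 1) / \<zz> \<in> adjoin (Ov \<inter> K) (\<gamma>2 * (\<alpha>2 - 1) / \<zz>)"
    using g1(1) g2(1) \<open>d \<in> K\<close> \<open>d \<in> Ov\<close> unfolding A_def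
    by (intro scaled_difference_mem_adjoin[OF O_val K_field _ _ _ _ d a2'(1) _ _ le]) auto
  then show ?thesis
    unfolding A_def by (rule adjoin_subset_adjoin[OF subring_Int[OF SO SK]])
qed

end
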